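(* A finite word is LSP if and only if it is a prefix of an infinite LSP word.
   Context: A finite word $u$ is a left special factor of a (finite or infinite) word $w$ if there are distinct letters $x\neq y$ such that $xu$ and $yu$ are factors of $w$. A word is LSP if every left special factor of it is a prefix of it. Words are over a finite alphabet. *)

theory Defs
  imports Main "HOL-Library.Sublist"
begin

definition inf_factor :: "'a list \<Rightarrow> (nat \<Rightarrow> 'a) \<Rightarrow> bool" where
  "inf_factor u x \<longleftrightarrow> (\<exists>i. u = map x [i..<i + length u])"

definition inf_prefix :: "'a list \<Rightarrow> (nat \<Rightarrow> 'a) \<Rightarrow> bool" where
  "inf_prefix u x \<longleftrightarrow> u = map x [0..<length u]"

definition left_special :: "'a list \<Rightarrow> 'a list \<Rightarrow> bool" where
  "left_special u w \<longleftrightarrow> (\<exists>a b. a \<noteq> b \<and> sublist (a # u) w \<and> sublist (b # u) w)"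

definition inf_left_special :: "'a list \<Rightarrow> (nat \<Rightarrow> 'a) \<Rightarrow> bool" where
  "inf_left_special u x \<longleftrightarrow> (\<exists>a b. a \<noteq> b \<and> inf_factor (a # u) x \<and> inf_factor (b # u) x)"

definition LSP :: "'a list \<Rightarrow> bool" where
  "LSP w \<longleftrightarrow> (\<forall>u. left_special u w \<longrightarrow> prefix u w)"

definition inf_LSP :: "(nat \<Rightarrow> 'a) \<Rightarrow> bool" where
  "inf_LSP x \<longleftrightarrow> (\<forall>u. inf_left_special u x \<longrightarrow> inf_prefix u x)"

end

theory Submission
  imports Defs
begin

text \<open>Every LSP word \<open>w\<close> has an LSP one-letter extension: if \<open>s\<close> is the longest left special
  proper suffix of \<open>w\<close>, then \<open>s\<close> is a prefix of \<open>w\<close>, and appending the letter that follows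
  this prefix creates no left special factor that is not a prefix. Iterating gives an infinite
  word whose prefixes are all LSP; it is LSP because any two of its factors lie in a common
  prefix. Conversely, the prefixes of an infinite LSP word are LSP. The alphabet need not be
  finite.\<close>

lemma left_special_mono: "left_special u v \<Longrightarrow> sublist v w \<Longrightarrow> left_special u w"
  unfolding left_special_def by (meson sublist_order.order.trans)

lemma LSP_prefix:
  assumes "LSP w" and "prefix v w"
  shows "LSP v"
  unfolding LSP_def
proof (intro allI impI)
  fix u assume ls: "left_special u v"
  then have "prefix u w"
    using assms left_special_mono prefix_imp_sublist unfolding LSP_def by blast
  moreover from ls have "length u \<le> length v"
    unfolding left_special_def by (auto dest: sublist_length_le)
  ultimately show "prefix u v" by (rule prefix_length_prefix[OF _ assms(2)])
qed

lemma left_special_snoc_new: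
  assumes "left_special u (w @ [c])" and "\<not> left_special u w"
  obtains a b where "a \<noteq> b" "suffix (a # u) (w @ [c])" "sublist (b # u) w"
proof -
  from assms(1) obtain a b where ab: "a \<noteq> b"
    "sublist (a # u) (w @ [c])" "sublist (b # u) (w @ [c])"
    unfolding left_special_def by blast
  have not_both_suffix: "\<not> (suffix (a # u) (w @ [c]) \<and> suffix (b # u) (w @ [c]))"
  proof
    assume "suffix (a # u) (w @ [c]) \<and> suffix (b # u) (w @ [c])"
    then have "suffix (a # u) (b # u)"
      by (elim conjE) (rule suffix_length_suffix, assumption+, simp)
    with ab(1) show False by (auto simp: suffix_def)
  qed
  have not_both_old: "\<not> (sublist (a # u) w \<and> sublist (b # u) w)"
    using ab(1) assms(2) unfolding left_special_def by blast
  from ab(2,3) have "(suffix (a # u) (w @ [c]) \<or> sublist (a # u) w)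
      \<and> (suffix (b # u) (w @ [c]) \<or> sublist (b # u) w)"
    by (simp only: sublist_snoc)
  with not_both_suffix not_both_old consider
      "suffix (a # u) (w @ [c])" "sublist (b # u) w"
    | "suffix (b # u) (w @ [c])" "sublist (a # u) w"
    by blast
  then show thesis
  proof cases
    case 1
    with ab(1) show thesis by (rule that)
  next
    case 2
    with ab(1)[symmetric] show thesis by (rule that)
  qed
qed

text \<open>A left special factor of \<open>w @ [c]\<close> that is not left special in \<open>w\<close> has the form
  \<open>t @ [c]\<close> with \<open>t\<close> a left special proper suffix of \<open>w\<close>.\<close>

lemma LSP_snocI:
  assumes "LSP w"
    and new: "\<And>t. left_special t w \<Longrightarrow> strict_suffix t w \<Longrightarrow> left_special (t @ [c]) (w @ [c])
      \<Longrightarrow> prefix (t @ [c]) w"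
  shows "LSP (w @ [c])"
  unfolding LSP_def
proof (intro allI impI)
  fix u assume ls: "left_special u (w @ [c])"
  show "prefix u (w @ [c])"
  proof (cases "left_special u w")
    case True
    then show ?thesis using assms(1) unfolding LSP_def by auto
  next
    case False
    with ls obtain a b where ab: "a \<noteq> b" "suffix (a # u) (w @ [c])" "sublist (b # u) w"
      by (rule left_special_snoc_new)
    show ?thesis
    proof (cases u rule: rev_cases)
      case (snoc t d)
      with ab(2) have "d = c" and sa: "suffix (a # t) w" by simp_all
      have "sublist (b # t) (b # t @ [d])"
        by (metis append_Cons sublist_append_rightI)
      then have "sublist (b # t) w"
        using ab(3) unfolding snoc by (rule sublist_order.order.trans)
      with sa ab(1) have "left_special t w"
        unfolding left_special_def by (blast intro: suffix_imp_sublist)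
      moreover from sa have "strict_suffix t w" by (rule suffix_ConsD')
      ultimately have "prefix (t @ [c]) w" using ls new unfolding snoc \<open>d = c\<close> by blast
      then show ?thesis unfolding snoc \<open>d = c\<close> by simp
    qed simp
  qed
qed

lemma short_sublist_snoc:
  assumes "suffix s w" and "prefix (s @ [c]) w"
    and "sublist v (w @ [c])" and "length v \<le> Suc (length s)"
  shows "sublist v w"
  using assms(3) unfolding sublist_snoc
proof
  assume "suffix v (w @ [c])"
  then consider "v = []" | v' where "v = v' @ [c]" "suffix v' w"
    unfolding suffix_snoc by blast
  then show "sublist v w"
  proof cases
    case 2
    have "suffix v' s"
      using 2(2) assms(1) by (rule suffix_length_suffix) (use 2(1) assms(4) in simp)
    then have "sublist (v' @ [c]) (s @ [c])" by simp
    also have "sublist (s @ [c]) w" using assms(2) by (rule prefix_imp_sublist)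
    finally show ?thesis using 2 by simp
  qed simp
qed

text \<open>Extend \<open>w\<close> by the letter following the longest left special proper suffix \<open>s\<close>,
  which is a prefix of \<open>w\<close>: then \<open>s @ [c]\<close> occurs in \<open>w\<close> and the shorter candidates
  \<open>t @ [c]\<close> were already left special in \<open>w\<close>.\<close>

lemma LSP_snoc_exists:
  assumes "LSP w"
  shows "\<exists>c. LSP (w @ [c])"
proof (cases "\<exists>t. left_special t w \<and> strict_suffix t w")
  case False
  then have "LSP (w @ [c])" for c
    using assms by (intro LSP_snocI) auto
  then show ?thesis by blast
next
  case True
  let ?Q = "\<lambda>t. left_special t w \<and> strict_suffix t w"
  from True obtain t0 where "?Q t0" ..
  moreover have "\<forall>t. ?Q t \<longrightarrow> length t < length w"
    by (simp add: suffix_length_less)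
  ultimately obtain s where s: "left_special s w" "strict_suffix s w"
    and longest: "\<And>t. left_special t w \<Longrightarrow> strict_suffix t w \<Longrightarrow> length t \<le> length s"
    using ex_has_greatest_nat[of ?Q t0 length "length w"] by blast
  have "prefix s w" using s(1) assms unfolding LSP_def by blast
  moreover have "length s < length w" using s(2) by (rule suffix_length_less)
  ultimately have prefix_sc: "prefix (s @ [w ! length s]) w" by (rule append_one_prefix)
  have "LSP (w @ [w ! length s])"
  proof (rule LSP_snocI[OF assms])
    fix t assume t: "left_special t w" "strict_suffix t w"
      and ls: "left_special (t @ [w ! length s]) (w @ [w ! length s])"
    have "suffix t s"
      using suffix_order.less_imp_le[OF t(2)] suffix_order.less_imp_le[OF s(2)] longest[OF t]
      by (rule suffix_length_suffix)
    show "prefix (t @ [w ! length s]) w"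
    proof (cases "t = s")
      case False
      with \<open>suffix t s\<close> have "length t < length s"
        by (simp add: strict_suffix_def suffix_length_less)
      have "sublist (a # t @ [w ! length s]) w"
        if "sublist (a # t @ [w ! length s]) (w @ [w ! length s])" for a
        using short_sublist_snoc[OF suffix_order.less_imp_le[OF s(2)] prefix_sc that]
          \<open>length t < length s\<close> by simp
      with ls have "left_special (t @ [w ! length s]) w"
        unfolding left_special_def by blast
      then show ?thesis using assms unfolding LSP_def by blast
    qed (use prefix_sc in simp)
  qed
  then show ?thesis by blast
qed

lemma inf_word_of_snoc_extensible:
  assumes "P w" and extensible: "\<And>v. P v \<Longrightarrow> \<exists>c. P (v @ [c])"
  obtains x where "inf_prefix w x" and "\<And>n. P (map x [0..<length w + n])"
proof -
  define W where "W k = ((\<lambda>v. v @ [SOME c. P (v @ [c])]) ^^ k) w" for k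
  have W_Suc: "W (Suc k) = W k @ [SOME c. P (W k @ [c])]" for k
    by (simp add: W_def)
  have P_W: "P (W k)" for k
  proof (induction k)
    case 0 then show ?case using assms(1) by (simp add: W_def)
  next
    case (Suc k)
    then show ?case unfolding W_Suc by (rule someI_ex[OF extensible])
  qed
  have length_W: "length (W k) = length w + k" for k
    by (induction k) (simp_all add: W_Suc, simp add: W_def)
  have prefix_W: "prefix (W k) (W m)" if "k \<le> m" for k m
    using that by (induction m rule: dec_induct) (simp_all add: W_Suc)
  define x where "x n = W (Suc n) ! n" for n
  have nth_W: "W k ! i = W m ! i" if "i < length (W k)" "i < length (W m)" for k m i
  proof -
    have nth_prefix: "xs ! i = ys ! i" if "prefix xs ys" "i < length xs" for xs ys
      using that by (auto simp: prefix_def nth_append)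
    have "W k ! i = W (max k m) ! i" by (rule nth_prefix[OF prefix_W]) (simp_all add: that)
    also have "\<dots> = W m ! i" by (rule nth_prefix[OF prefix_W, symmetric]) (simp_all add: that)
    finally show ?thesis .
  qed
  have map_x: "map x [0..<length w + m] = W m" for m
  proof (rule nth_equalityI)
    fix i assume "i < length (map x [0..<length w + m])"
    then show "map x [0..<length w + m] ! i = W m ! i"
      using nth_W[of i "Suc i" m] by (simp add: x_def length_W)
  qed (simp add: length_W)
  show thesis
  proof
    show "inf_prefix w x" using map_x[of 0] by (simp add: inf_prefix_def W_def)
    show "P (map x [0..<length w + n])" for n using P_W map_x by simp
  qed
qed

lemma prefix_map_upt:
  assumes "m \<le> n"
  shows "prefix (map x [0..<m]) (map x [0..<n])"
proof -
  from assms have "take m (map x [0..<n]) = map x [0..<m]" by (simp add: take_map)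
  then show ?thesis by (metis take_is_prefix)
qed

lemma inf_prefix_iff_prefix_map_upt:
  assumes "length u \<le> n"
  shows "inf_prefix u x \<longleftrightarrow> prefix u (map x [0..<n])"
  unfolding inf_prefix_def
proof
  assume "u = map x [0..<length u]"
  with prefix_map_upt[OF assms] show "prefix u (map x [0..<n])" by metis
next
  assume "prefix u (map x [0..<n])"
  then have "u = take (length u) (map x [0..<n])" by (auto simp: prefix_def)
  with assms show "u = map x [0..<length u]" by (simp add: take_map)
qed

lemma inf_factor_iff_sublist_map_upt:
  "inf_factor v x \<longleftrightarrow> (\<exists>n. sublist v (map x [0..<n]))"
proof
  assume "inf_factor v x"
  then obtain i where v: "v = map x [i..<i + length v]" unfolding inf_factor_def ..
  have "map x [0..<i + length v] = map x [0..<i] @ v"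
    by (subst v, subst upt_add_eq_append) simp_all
  then show "\<exists>n. sublist v (map x [0..<n])" by (metis sublist_append_leftI)
next
  assume "\<exists>n. sublist v (map x [0..<n])"
  then obtain n ps ss where e: "map x [0..<n] = ps @ v @ ss"
    unfolding sublist_def by blast
  from arg_cong[OF e, of length] have "length ps + length v \<le> n" by simp
  from e have "v = take (length v) (drop (length ps) (map x [0..<n]))" by simp
  also have "\<dots> = map x [length ps..<length ps + length v]"
    using \<open>length ps + length v \<le> n\<close> by (simp add: drop_map take_map)
  finally show "inf_factor v x" unfolding inf_factor_def by blast
qed

lemma inf_LSP_iff_LSP_map_upt: "inf_LSP x \<longleftrightarrow> (\<forall>n. LSP (map x [0..<n]))"
proof
  assume inf: "inf_LSP x"
  show "\<forall>n. LSP (map x [0..<n])" unfolding LSP_def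
  proof (intro allI impI)
    fix n u assume "left_special u (map x [0..<n])"
    then obtain a b where ab: "a \<noteq> b"
      "sublist (a # u) (map x [0..<n])" "sublist (b # u) (map x [0..<n])"
      unfolding left_special_def by blast
    then have "inf_left_special u x"
      unfolding inf_left_special_def inf_factor_iff_sublist_map_upt by blast
    with inf have "inf_prefix u x" unfolding inf_LSP_def by blast
    moreover from sublist_length_le[OF ab(2)] have "length u \<le> n" by simp
    ultimately show "prefix u (map x [0..<n])" by (simp add: inf_prefix_iff_prefix_map_upt)
  qed
next
  assume fin: "\<forall>n. LSP (map x [0..<n])"
  show "inf_LSP x" unfolding inf_LSP_def
  proof (intro allI impI)
    fix u assume "inf_left_special u x"
    then obtain a b m m' where ab: "a \<noteq> b"
      "sublist (a # u) (map x [0..<m])" "sublist (b # u) (map x [0..<m'])"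
      unfolding inf_left_special_def inf_factor_iff_sublist_map_upt by blast
    let ?X = "map x [0..<max m m']"
    have "sublist (a # u) ?X" "sublist (b # u) ?X"
      by (rule sublist_order.order.trans[OF ab(2) prefix_imp_sublist[OF prefix_map_upt]], simp)
        (rule sublist_order.order.trans[OF ab(3) prefix_imp_sublist[OF prefix_map_upt]], simp)
    then have "left_special u ?X" using ab(1) unfolding left_special_def by blast
    then have "prefix u ?X" using fin unfolding LSP_def by blast
    moreover from sublist_length_le[OF \<open>sublist (a # u) ?X\<close>] have "length u \<le> max m m'"
      by simp
    ultimately show "inf_prefix u x" by (simp add: inf_prefix_iff_prefix_map_upt)
  qed
qed

theorem lemma6:
  fixes w :: "'a::finite list"
  shows "LSP w \<longleftrightarrow> (\<exists>x :: nat \<Rightarrow> 'a. inf_LSP x \<and> inf_prefix w x)"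
proof
  assume "LSP w"
  then obtain x where "inf_prefix w x" and LSP_x: "\<And>n. LSP (map x [0..<length w + n])"
    using inf_word_of_snoc_extensible LSP_snoc_exists by blast
  have "LSP (map x [0..<n])" for n
    by (rule LSP_prefix[OF LSP_x[of n] prefix_map_upt]) simp
  with \<open>inf_prefix w x\<close> show "\<exists>x. inf_LSP x \<and> inf_prefix w x"
    by (auto simp: inf_LSP_iff_LSP_map_upt)
next
  assume "\<exists>x. inf_LSP x \<and> inf_prefix w x"
  then obtain x where "inf_LSP x" and "w = map x [0..<length w]"
    unfolding inf_prefix_def by blast
  then show "LSP w" by (metis inf_LSP_iff_LSP_map_upt)
qed

end
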